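(* Let $0 \le l < k < n$ and let $\theta, \mu$ be real numbers with $\theta \ge \mu$ and $\theta > 0$. For $\kappa = (\kappa_1,\dots,\kappa_n) \in \mathbb{R}^n$ put $\lambda_i = \theta \sum_{j=1}^n \kappa_j - \mu \kappa_i$, and suppose $\lambda = (\lambda_1,\dots,\lambda_n) \in \Gamma_k$. Define \[ F(\kappa) = \frac{\sigma_k(\lambda)}{\sigma_l(\lambda)}, \qquad F^{ii} = \frac{\partial F}{\partial \kappa_i}(\kappa), \] and suppose $\kappa_1 \ge \kappa_2 \ge \cdots \ge \kappa_n$. Then there is a constant $c_1 = c_1(n,k,l,\theta,\mu) > 0$ such that \[ F^{11} \ge c_1 \sum_{i=1}^n F^{ii}, \] and, for any $m > 0$ with $F(\kappa) \ge m$, a constant $c_2 = c_2(n,k,l,\theta,\mu,m) > 0$ such that \[ \sum_{i=1}^n F^{ii} \ge c_2 . \]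
   Context: $\sigma_j$ denotes the $j$-th elementary symmetric polynomial on $\mathbb{R}^n$, with $\sigma_0 = 1$; $\Gamma_k = \{x \in \mathbb{R}^n : \sigma_j(x) > 0 \text{ for } 1 \le j \le k\}$. The $\kappa_i$ are the eigenvalues of a (diagonal) symmetric matrix $W$, and the $\lambda_i$ are then the eigenvalues of $\theta\,\sigma_1(W) I - \mu W$. *)

theory Defs
  imports "HOL-Analysis.Analysis"
begin

text \<open>Vectors in R^n are represented as functions nat => real; only indices 0..n-1 matter
  (the paper's index i corresponds to i-1 here).\<close>

definition esym :: "nat \<Rightarrow> nat \<Rightarrow> (nat \<Rightarrow> real) \<Rightarrow> real" where
  "esym n j x = (\<Sum>S\<in>{S. S \<subseteq> {..<n} \<and> card S = j}. \<Prod>i\<in>S. x i)"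

definition Gamma :: "nat \<Rightarrow> nat \<Rightarrow> (nat \<Rightarrow> real) set" where
  "Gamma n k = {x. \<forall>j. 1 \<le> j \<and> j \<le> k \<longrightarrow> esym n j x > 0}"

definition lam :: "real \<Rightarrow> real \<Rightarrow> nat \<Rightarrow> (nat \<Rightarrow> real) \<Rightarrow> (nat \<Rightarrow> real)" where
  "lam \<theta> \<mu> n \<kappa> = (\<lambda>i. \<theta> * (\<Sum>j<n. \<kappa> j) - \<mu> * \<kappa> i)"

definition Fq :: "nat \<Rightarrow> nat \<Rightarrow> nat \<Rightarrow> real \<Rightarrow> real \<Rightarrow> (nat \<Rightarrow> real) \<Rightarrow> real" where
  "Fq n k l \<theta> \<mu> \<kappa> = esym n k (lam \<theta> \<mu> n \<kappa>) / esym n l (lam \<theta> \<mu> n \<kappa>)"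

definition Fii :: "nat \<Rightarrow> nat \<Rightarrow> nat \<Rightarrow> real \<Rightarrow> real \<Rightarrow> (nat \<Rightarrow> real) \<Rightarrow> nat \<Rightarrow> real" where
  "Fii n k l \<theta> \<mu> \<kappa> i = deriv (\<lambda>t. Fq n k l \<theta> \<mu> (\<kappa>(i := t))) (\<kappa> i)"

end

theory Submission
  imports Defs "HOL-Computational_Algebra.Polynomial"
begin

text \<open>
  Write y = lambda(kappa), f_p for the partial derivative of sigma_k/sigma_l in y_p, and S = sum_p f_p.
  By the chain rule F^ii = theta S - mu f_i, hence sum_i F^ii = (n theta - mu) S.
  On Gamma_k every f_p is nonnegative, and the Newton-Maclaurin inequalities (derived from Newton's
  inequalities for real-rooted polynomials, which survive differentiation by Rolle's theorem and
  reflection) squeeze S between constant multiples of sigma_(k-1)/sigma_l. Since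
  sigma_(k-1)/sigma_l >= min 1 (sigma_k/sigma_l), this gives the second claim.
  For the first, F^11 >= theta S when mu <= 0. When mu > 0 the entries of lambda increase, and
  F^11 = (theta - mu) S + mu sum_(p > 1) f_p >= mu f_2, where lambda_2 is the second smallest entry;
  a Lin-Trudinger type estimate sigma_j(lambda) <= C sigma_j(lambda | 2) for j < k then bounds f_2
  from below by a multiple of sigma_(k-1)/sigma_l, hence of S.
\<close>

section \<open>Elementary symmetric functions on finite index sets\<close>

definition esym_on :: "nat set \<Rightarrow> nat \<Rightarrow> (nat \<Rightarrow> real) \<Rightarrow> real" where
  "esym_on A j x = (\<Sum>S\<in>{S. S \<subseteq> A \<and> card S = j}. \<Prod>i\<in>S. x i)"

lemma esym_eq_esym_on: "esym n j x = esym_on {..<n} j x"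
  by (simp add: esym_def esym_on_def)

lemma esym_on_0 [simp]:
  assumes "finite A"
  shows "esym_on A 0 x = 1"
proof -
  have "{S. S \<subseteq> A \<and> card S = 0} = {{}}"
    using assms finite_subset by fastforce
  then show ?thesis by (simp add: esym_on_def)
qed

lemma esym_on_eq_0:
  assumes "finite A" "card A < j"
  shows "esym_on A j x = 0"
proof -
  have "{S. S \<subseteq> A \<and> card S = j} = {}"
    using assms card_mono by (metis (mono_tags, lifting) Collect_empty_eq leD)
  then show ?thesis unfolding esym_on_def by (metis sum.empty)
qed

lemma esym_on_nonneg: "finite A \<Longrightarrow> (\<And>i. i \<in> A \<Longrightarrow> 0 \<le> x i) \<Longrightarrow> 0 \<le> esym_on A j x"
  unfolding esym_on_def by (intro sum_nonneg prod_nonneg) auto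

lemma esym_on_pos:
  assumes "finite A" "\<And>i. i \<in> A \<Longrightarrow> 0 < x i" "j \<le> card A"
  shows "0 < esym_on A j x"
proof -
  obtain T where "T \<subseteq> A" "card T = j"
    using obtain_subset_with_card_n[OF assms(3)] by blast
  then have "{S. S \<subseteq> A \<and> card S = j} \<noteq> {}" by blast
  then show ?thesis
    unfolding esym_on_def using assms(1,2) by (intro sum_pos prod_pos) auto
qed

lemma esym_on_insert:
  assumes "finite A" "a \<notin> A"
  shows "esym_on (insert a A) (Suc j) x = esym_on A (Suc j) x + x a * esym_on A j x"
proof -
  let ?L = "{S. S \<subseteq> A \<and> card S = Suc j}"
  let ?R = "{S. S \<subseteq> A \<and> card S = j}"
  have split: "{S. S \<subseteq> insert a A \<and> card S = Suc j} = ?L \<union> insert a ` ?R"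
  proof (intro equalityI subsetI)
    fix S assume S: "S \<in> {S. S \<subseteq> insert a A \<and> card S = Suc j}"
    then have "finite S" using assms(1) finite_subset by auto
    show "S \<in> ?L \<union> insert a ` ?R"
    proof (cases "a \<in> S")
      case True
      then have "S = insert a (S - {a})" "S - {a} \<in> ?R"
        using S \<open>finite S\<close> by auto
      then show ?thesis by blast
    qed (use S in auto)
  next
    fix S assume "S \<in> ?L \<union> insert a ` ?R"
    moreover have "card (insert a T) = Suc j" if "T \<in> ?R" for T
      using that assms finite_subset by (subst card_insert_disjoint) auto
    ultimately show "S \<in> {S. S \<subseteq> insert a A \<and> card S = Suc j}" by auto
  qed
  have "inj_on (insert a) ?R"
    unfolding inj_on_def using assms(2) by (metis (mono_tags, lifting) insert_ident mem_Collect_eq subsetD)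
  moreover have "(\<Prod>i\<in>insert a T. x i) = x a * (\<Prod>i\<in>T. x i)" if "T \<in> ?R" for T
    using that assms finite_subset by (subst prod.insert) auto
  ultimately have "(\<Sum>S\<in>insert a ` ?R. \<Prod>i\<in>S. x i) = x a * esym_on A j x"
    by (simp add: sum.reindex esym_on_def sum_distrib_left)
  moreover have "?L \<inter> insert a ` ?R = {}" using assms(2) by auto
  ultimately show ?thesis
    unfolding esym_on_def split using assms(1) by (simp add: sum.union_disjoint)
qed

lemma esym_on_remove:
  assumes "finite A" "i \<in> A"
  shows "esym_on A (Suc j) x = esym_on (A - {i}) (Suc j) x + x i * esym_on (A - {i}) j x"
  using esym_on_insert[of "A - {i}" i j x] assms by (simp add: insert_absorb)

lemma sum_mult_esym_on_remove:
  "finite A \<Longrightarrow> (\<Sum>p\<in>A. x p * esym_on (A - {p}) j x) = real (Suc j) * esym_on A (Suc j) x"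
proof (induction A arbitrary: j rule: finite_induct)
  case empty
  then show ?case by (simp add: esym_on_eq_0)
next
  case (insert a F)
  have remove_insert: "insert a F - {p} = insert a (F - {p})" if "p \<in> F" for p
    using that insert.hyps by auto
  have "(\<Sum>p\<in>insert a F. x p * esym_on (insert a F - {p}) j x)
      = x a * esym_on F j x + (\<Sum>p\<in>F. x p * esym_on (insert a (F - {p})) j x)"
    using insert.hyps remove_insert by (simp add: sum.insert)
  also have "\<dots> = real (Suc j) * esym_on (insert a F) (Suc j) x"
  proof (cases j)
    case 0
    have "(\<Sum>p\<in>F. x p * esym_on (insert a (F - {p})) 0 x) = (\<Sum>p\<in>F. x p * esym_on (F - {p}) 0 x)"
      using insert.hyps by (intro sum.cong) auto
    then show ?thesis
      using 0 insert.IH[of 0] insert.hyps by (simp add: esym_on_insert)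
  next
    case (Suc i)
    have "(\<Sum>p\<in>F. x p * esym_on (insert a (F - {p})) j x)
        = (\<Sum>p\<in>F. x p * esym_on (F - {p}) j x) + x a * (\<Sum>p\<in>F. x p * esym_on (F - {p}) i x)"
      unfolding Suc using insert.hyps
      by (simp add: esym_on_insert sum.distrib sum_distrib_left algebra_simps)
    then show ?thesis
      using Suc insert.IH insert.hyps by (simp add: esym_on_insert algebra_simps)
  qed
  finally show ?case .
qed

lemma sum_esym_on_remove:
  assumes "finite A"
  shows "(\<Sum>p\<in>A. esym_on (A - {p}) j x) = (real (card A) - real j) * esym_on A j x"
proof (cases j)
  case (Suc i)
  have "real (card A) * esym_on A j x = (\<Sum>p\<in>A. esym_on A j x)" by simp
  also have "\<dots> = (\<Sum>p\<in>A. esym_on (A - {p}) j x) + (\<Sum>p\<in>A. x p * esym_on (A - {p}) i x)"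
    unfolding Suc using assms by (simp add: esym_on_remove sum.distrib)
  finally show ?thesis
    using sum_mult_esym_on_remove[OF assms, of x i] Suc by (simp add: algebra_simps)
qed (use assms in simp)

definition esym_on_partial :: "nat set \<Rightarrow> nat \<Rightarrow> (nat \<Rightarrow> real) \<Rightarrow> nat \<Rightarrow> real" where
  "esym_on_partial A j y p = (if j = 0 then 0 else esym_on (A - {p}) (j - 1) y)"

lemma esym_on_partial_insert:
  assumes "finite F" "a \<notin> F" "p \<in> F"
  shows "esym_on_partial (insert a F) (Suc j) y p = esym_on_partial F (Suc j) y p + y a * esym_on_partial F j y p"
proof -
  have "insert a F - {p} = insert a (F - {p})" using assms by auto
  then show ?thesis
    using assms by (cases j) (simp_all add: esym_on_partial_def esym_on_insert)
qed

lemma esym_on_line_has_derivative: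
  assumes "finite A"
  shows "((\<lambda>t. esym_on A j (\<lambda>i. x i + t * v i)) has_real_derivative
           (\<Sum>p\<in>A. v p * esym_on_partial A j (\<lambda>i. x i + t0 * v i) p)) (at t0)"
  using assms
proof (induction A arbitrary: j rule: finite_induct)
  case empty
  then show ?case by (cases j) (simp_all add: esym_on_eq_0 esym_on_partial_def)
next
  case (insert a F)
  let ?y = "\<lambda>t i. x i + t * v i"
  show ?case
  proof (cases j)
    case 0
    then show ?thesis using insert.hyps by (simp add: esym_on_partial_def)
  next
    case (Suc i)
    have "(\<lambda>t. esym_on (insert a F) j (?y t)) = (\<lambda>t. esym_on F j (?y t) + (x a + t * v a) * esym_on F i (?y t))"
      using insert.hyps Suc by (simp add: esym_on_insert)
    moreover have "((\<lambda>t. x a + t * v a) has_real_derivative v a) (at t0)"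
      by (auto intro!: derivative_eq_intros)
    ultimately have "((\<lambda>t. esym_on (insert a F) j (?y t)) has_real_derivative
        (\<Sum>p\<in>F. v p * esym_on_partial F j (?y t0) p)
        + (v a * esym_on F i (?y t0) + (\<Sum>p\<in>F. v p * esym_on_partial F i (?y t0) p) * (x a + t0 * v a)))
        (at t0)"
      by (simp only:) (intro DERIV_add DERIV_mult insert.IH)
    moreover have "(\<Sum>p\<in>F. v p * esym_on_partial F j (?y t0) p)
        + (v a * esym_on F i (?y t0) + (\<Sum>p\<in>F. v p * esym_on_partial F i (?y t0) p) * (x a + t0 * v a))
      = (\<Sum>p\<in>insert a F. v p * esym_on_partial (insert a F) j (?y t0) p)"
    proof -
      have "esym_on_partial (insert a F) j (?y t0) a = esym_on F i (?y t0)"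
        using insert.hyps Suc by (simp add: esym_on_partial_def)
      then show ?thesis
        using insert.hyps Suc
        by (simp add: esym_on_partial_insert sum.distrib sum_distrib_left algebra_simps)
    qed
    ultimately show ?thesis by simp
  qed
qed

lemma sum_esym_on_partial:
  "finite A \<Longrightarrow> (\<Sum>p\<in>A. esym_on_partial A j y p)
    = (if j = 0 then 0 else (real (card A) - real (j - 1)) * esym_on A (j - 1) y)"
  by (simp add: esym_on_partial_def sum_esym_on_remove)

section \<open>Newton's inequalities\<close>

definition esym_poly :: "nat set \<Rightarrow> (nat \<Rightarrow> real) \<Rightarrow> real poly" where
  "esym_poly A x = (\<Prod>i\<in>A. [:x i, 1:])"

lemma coeff_esym_poly:
  "finite A \<Longrightarrow> coeff (esym_poly A x) d = (if d \<le> card A then esym_on A (card A - d) x else 0)"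
proof (induction A arbitrary: d rule: finite_induct)
  case empty
  then show ?case by (simp add: esym_poly_def coeff_1)
next
  case (insert a F)
  have coeff_linear_mult: "coeff ([:c, 1:] * q) d = c * coeff q d + (case d of 0 \<Rightarrow> 0 | Suc d' \<Rightarrow> coeff q d')"
    for c :: real and q d
    by (cases d) (simp_all add: mult_pCons_left coeff_pCons)
  have "esym_poly (insert a F) x = [:x a, 1:] * esym_poly F x"
    using insert.hyps by (simp add: esym_poly_def)
  moreover have "card (insert a F) = Suc (card F)" using insert.hyps by simp
  moreover have "card F - d' = Suc (card F - Suc d')" if "d' < card F" for d'
    using that by simp
  ultimately show ?case
    using insert by (cases d) (auto simp: coeff_linear_mult esym_on_insert esym_on_eq_0 not_less_eq_eq)
qed

lemma degree_esym_poly: "finite A \<Longrightarrow> degree (esym_poly A x) = card A"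
  unfolding esym_poly_def by (subst degree_prod_sum_eq) auto

definition real_rooted :: "real poly \<Rightarrow> bool" where
  "real_rooted p \<longleftrightarrow> p \<noteq> 0 \<and> size (proots p) = degree p"

lemma real_rooted_esym_poly:
  assumes "finite A"
  shows "real_rooted (esym_poly A x)"
proof -
  have "esym_poly A x \<noteq> 0"
    using assms unfolding esym_poly_def by (simp add: prod_zero_iff)
  moreover have "proots (esym_poly A x) = (\<Sum>i\<in>A. {#- x i#})"
    unfolding esym_poly_def by (subst proots_prod) auto
  ultimately show ?thesis
    using assms by (simp add: real_rooted_def degree_esym_poly)
qed

lemma real_rooted_factorization:
  "real_rooted p \<Longrightarrow> p = smult (lead_coeff p) (\<Prod>x\<in>#proots p. [:-x, 1:])"
proof (induction "degree p" arbitrary: p)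
  case 0
  then have "proots p = {#}" by (simp add: real_rooted_def)
  moreover have "p = [:lead_coeff p:]" using 0 by (metis degree_0_id)
  ultimately show ?case by simp
next
  case (Suc d)
  then obtain x where "x \<in># proots p"
    by (metis real_rooted_def size_eq_0_iff_empty nat.distinct(1) multiset_nonemptyE)
  then have "poly p x = 0" using Suc.prems by (simp add: real_rooted_def)
  then obtain q where q: "p = [:-x, 1:] * q" using poly_eq_0_iff_dvd by (metis dvdE)
  have "q \<noteq> 0" using q Suc.prems by (auto simp: real_rooted_def)
  moreover have "[:-x, 1:] \<noteq> 0" by simp
  ultimately have roots: "proots p = add_mset x (proots q)" and "degree q = d"
    using q Suc.hyps(2) proots_mult[of "[:-x, 1:]" q] degree_mult_eq[of "[:-x, 1:]" q]
    by (simp_all del: mult_pCons_left)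
  then have "real_rooted q"
    using Suc.prems Suc.hyps(2) \<open>q \<noteq> 0\<close> by (simp add: real_rooted_def)
  with Suc.hyps(1) \<open>degree q = d\<close> have "q = smult (lead_coeff q) (\<Prod>x\<in>#proots q. [:-x, 1:])"
    by blast
  then have "p = [:-x, 1:] * smult (lead_coeff q) (\<Prod>x\<in>#proots q. [:-x, 1:])"
    using q by simp
  also have "lead_coeff q = lead_coeff p"
    using q lead_coeff_mult[of "[:-x, 1:]" q] by (simp del: mult_pCons_left)
  finally show ?case by (simp add: roots mult_smult_right)
qed

lemma Rolle_card_zeros:
  fixes f f' :: "real \<Rightarrow> real"
  assumes deriv: "\<And>x. (f has_real_derivative f' x) (at x)"
  shows "finite R \<Longrightarrow> R \<noteq> {} \<Longrightarrow> (\<forall>r\<in>R. f r = 0) \<Longrightarrow>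
    \<exists>Z. finite Z \<and> card Z + 1 = card R \<and> Z \<inter> R = {} \<and> (\<forall>z\<in>Z. f' z = 0) \<and> (\<forall>z\<in>Z. z < Max R)"
proof (induction "card R" arbitrary: R rule: less_induct)
  case less
  show ?case
  proof (cases "card R = 1")
    case True
    then show ?thesis by (intro exI[of _ "{}"]) auto
  next
    case False
    define a where "a = Max R"
    define R' where "R' = R - {a}"
    have "a \<in> R" using less.prems a_def by auto
    then have card_R: "card R = Suc (card R')"
      using less.prems unfolding R'_def by (metis card_Suc_Diff1)
    have "R' \<noteq> {}" "finite R'" "\<forall>r\<in>R'. f r = 0"
      using less.prems False card_R by (auto simp: R'_def)
    then obtain Z' where Z': "finite Z'" "card Z' + 1 = card R'" "Z' \<inter> R' = {}"
      "\<forall>z\<in>Z'. f' z = 0" "\<forall>z\<in>Z'. z < Max R'"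
      using less.hyps[of R'] card_R by auto
    define b where "b = Max R'"
    have "b \<in> R'" using \<open>finite R'\<close> \<open>R' \<noteq> {}\<close> b_def by auto
    then have "b < a" using less.prems unfolding R'_def a_def
      by (metis DiffD1 DiffD2 Max_ge insertI1 order_le_neq_trans)
    obtain z where z: "b < z" "z < a" "f' z = 0"
    proof -
      have "f b = f a" using \<open>b \<in> R'\<close> \<open>a \<in> R\<close> less.prems R'_def by auto
      moreover have "continuous_on {b..a} f"
        using deriv by (intro continuous_at_imp_continuous_on ballI) (meson DERIV_continuous)
      ultimately obtain z where "b < z" "z < a" "(\<lambda>v. f' z * v) = (\<lambda>v. 0)"
        using Rolle_deriv[OF \<open>b < a\<close>, of f "\<lambda>x v. f' x * v"] deriv
        by (auto simp: has_field_derivative_def mult_commute_abs)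
      then show ?thesis using that by (metis mult_cancel_left1)
    qed
    have "z \<notin> R"
      using z \<open>finite R'\<close> Max_ge[of R'] unfolding R'_def b_def by (metis DiffI leD order_less_imp_not_eq singletonD)
    moreover have "z \<notin> Z'" "a \<notin> Z'" using Z'(5) z \<open>b < a\<close> b_def by force+
    ultimately show ?thesis using Z' z \<open>b < a\<close> card_R
      by (intro exI[of _ "insert z Z'"]) (auto simp: R'_def a_def b_def)
  qed
qed

lemma sum_count_le_size: "finite X \<Longrightarrow> sum (count M) X \<le> size M"
proof -
  assume "finite X"
  then have "sum (count M) X = sum (count M) (X \<inter> set_mset M)"
    by (intro sum.mono_neutral_right) auto
  also have "\<dots> \<le> sum (count M) (set_mset M)" by (rule sum_mono2) auto
  finally show ?thesis by (simp add: size_multiset_overloaded_eq)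
qed

lemma real_rooted_pderiv:
  assumes "real_rooted p" "0 < degree p"
  shows "real_rooted (pderiv p)"
proof -
  have "p \<noteq> 0" and size_roots: "size (proots p) = degree p"
    using assms(1) by (auto simp: real_rooted_def)
  define R where "R = {x. poly p x = 0}"
  have "finite R" using poly_roots_finite[OF \<open>p \<noteq> 0\<close>] R_def by simp
  obtain x0 where "x0 \<in># proots p"
    using size_roots assms(2) by (metis multiset_nonemptyE less_irrefl size_empty)
  then have "R \<noteq> {}" using \<open>p \<noteq> 0\<close> R_def by auto
  have "\<exists>Z. finite Z \<and> card Z + 1 = card R \<and> Z \<inter> R = {} \<and> (\<forall>z\<in>Z. poly (pderiv p) z = 0)
      \<and> (\<forall>z\<in>Z. z < Max R)"
    by (rule Rolle_card_zeros[OF poly_DERIV \<open>finite R\<close> \<open>R \<noteq> {}\<close>]) (simp add: R_def)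
  then obtain Z where Z: "finite Z" "card Z + 1 = card R" "Z \<inter> R = {}"
    "\<forall>z\<in>Z. poly (pderiv p) z = 0"
    by blast
  have "pderiv p \<noteq> 0"
    using assms(2) by (simp add: pderiv_eq_0_iff)
  \<comment> \<open>each root of p of order m is a root of p' of order m - 1; the Rolle zeros are new roots\<close>
  have "(\<Sum>x\<in>R. order x p) = degree p"
    using size_roots \<open>p \<noteq> 0\<close> by (simp add: size_multiset_overloaded_eq R_def)
  moreover have "order x p = Suc (order x (pderiv p))" if "x \<in> R" for x
    using that order_pderiv \<open>p \<noteq> 0\<close> R_def by auto
  ultimately have "(\<Sum>x\<in>R. order x (pderiv p)) + card R = degree p"
    by (simp add: sum_Suc)
  moreover have "card Z \<le> (\<Sum>z\<in>Z. order z (pderiv p))"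
    using Z(4) \<open>pderiv p \<noteq> 0\<close> sum_mono[of Z "\<lambda>_. 1::nat" "\<lambda>z. order z (pderiv p)"]
    by (simp add: Suc_le_eq order_root)
  moreover have "(\<Sum>x\<in>R \<union> Z. order x (pderiv p)) \<le> size (proots (pderiv p))"
    using sum_count_le_size[of "R \<union> Z" "proots (pderiv p)"] \<open>finite R\<close> Z(1) \<open>pderiv p \<noteq> 0\<close>
    by simp
  moreover have "(\<Sum>x\<in>R \<union> Z. order x (pderiv p))
      = (\<Sum>x\<in>R. order x (pderiv p)) + (\<Sum>x\<in>Z. order x (pderiv p))"
    using \<open>finite R\<close> Z by (intro sum.union_disjoint) auto
  ultimately have "degree (pderiv p) \<le> size (proots (pderiv p))"
    using Z(2) by (simp add: degree_pderiv)
  with \<open>pderiv p \<noteq> 0\<close> show ?thesis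
    using size_proots_le[of "pderiv p"] by (simp add: real_rooted_def)
qed

lemma reflect_poly_prod_mset:
  "reflect_poly (\<Prod>x\<in>#M. f x) = (\<Prod>x\<in>#M. reflect_poly (f x :: 'a :: {comm_semiring_1, semiring_no_zero_divisors} poly))"
  by (induction M) (simp_all add: reflect_poly_mult)

lemma prod_mset_smult:
  "(\<Prod>x\<in>#M. smult (g x) (h x)) = smult (\<Prod>x\<in>#M. g x) (\<Prod>x\<in>#M. h x :: 'a :: comm_semiring_1 poly)"
  by (induction M) (simp_all add: mult_smult_left mult_smult_right mult_ac)

lemma proots_prod_mset_linear:
  "proots (\<Prod>x\<in>#M. [:- g x, 1 :: 'a :: idom:]) = image_mset g M"
proof (induction M)
  case (add x M)
  have "(\<Prod>x\<in>#M. [:- g x, 1 :: 'a:]) \<noteq> 0" by (auto simp: prod_mset_zero_iff)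
  then show ?case
    using add.IH proots_mult[of "[:- g x, 1:]" "\<Prod>x\<in>#M. [:- g x, 1:]"]
    by (simp del: mult_pCons_left)
qed simp

lemma real_rooted_reflect_poly:
  assumes "real_rooted p" "coeff p 0 \<noteq> 0"
  shows "real_rooted (reflect_poly p)"
proof -
  define M where "M = proots p"
  have "p \<noteq> 0" "size M = degree p" using assms(1) by (auto simp: real_rooted_def M_def)
  have nonzero: "x \<noteq> 0" if "x \<in># M" for x
    using that assms(2) \<open>p \<noteq> 0\<close> by (auto simp: M_def poly_0_coeff_0)
  have "reflect_poly p = smult (lead_coeff p) (\<Prod>x\<in>#M. reflect_poly [:-x, 1:])"
    using real_rooted_factorization[OF assms(1)]
    by (metis M_def reflect_poly_smult reflect_poly_prod_mset)
  also have "(\<Prod>x\<in>#M. reflect_poly [:-x, 1:]) = (\<Prod>x\<in>#M. smult (-x) [:- (1/x), 1:])"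
  proof (intro arg_cong[where f = prod_mset] image_mset_cong)
    fix x assume "x \<in># M"
    then show "reflect_poly [:-x, 1:] = smult (-x) [:- (1/x), 1:]"
      using nonzero by (simp add: reflect_poly_pCons' monom_altdef)
  qed
  also have "\<dots> = smult (\<Prod>x\<in>#M. -x) (\<Prod>x\<in>#M. [:- (1/x), 1:])"
    by (rule prod_mset_smult)
  finally have "reflect_poly p = smult (lead_coeff p * (\<Prod>x\<in>#M. -x)) (\<Prod>x\<in>#M. [:- (1/x), 1:])"
    by simp
  moreover have "lead_coeff p * (\<Prod>x\<in>#M. -x) \<noteq> 0"
    using \<open>p \<noteq> 0\<close> nonzero by (auto simp: prod_mset_zero_iff)
  ultimately have "size (proots (reflect_poly p)) = size M"
    by (simp add: proots_prod_mset_linear)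
  then show ?thesis
    using \<open>size M = degree p\<close> assms(2) \<open>p \<noteq> 0\<close> by (simp add: real_rooted_def)
qed

definition newton_coeff :: "real poly \<Rightarrow> nat \<Rightarrow> real" where
  "newton_coeff p j = coeff p (degree p - j) / real (degree p choose j)"

lemma newton_inequality_degree_2:
  assumes "real_rooted p" "degree p = 2"
  shows "newton_coeff p 0 * newton_coeff p 2 \<le> (newton_coeff p 1)\<^sup>2"
proof -
  obtain x where "x \<in># proots p"
    using assms by (metis real_rooted_def multiset_nonemptyE size_empty zero_neq_numeral)
  then have "poly p x = 0" using assms(1) by (simp add: real_rooted_def)
  define c0 c1 c2 where "c0 = coeff p 0" "c1 = coeff p 1" "c2 = coeff p 2"
  have "poly p x = c0 + c1 * x + c2 * x\<^sup>2"
    using assms(2) by (simp add: poly_altdef numeral_2_eq_2 c0_c1_c2_def)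
  with \<open>poly p x = 0\<close> have c0_eq: "c0 = - (c1 * x + c2 * x\<^sup>2)" by simp
  \<comment> \<open>a real root makes the discriminant a square\<close>
  have "c1\<^sup>2 - 4 * (c0 * c2) = (2 * c2 * x + c1)\<^sup>2"
    by (subst c0_eq) (simp add: algebra_simps power2_eq_square)
  then have "4 * (c0 * c2) \<le> c1\<^sup>2"
    by (metis diff_ge_0_iff_ge zero_le_power2)
  then show ?thesis
    using assms(2) by (simp add: newton_coeff_def power_divide mult.commute c0_c1_c2_def)
qed

lemma newton_coeff_pderiv:
  assumes "degree p = m" "j < m"
  shows "newton_coeff (pderiv p) j = real m * newton_coeff p j"
proof -
  define r where "r = real (m - j)"
  have binomial: "r * real (m choose j) = real m * real ((m - 1) choose j)"
    unfolding r_def by (metis binomial_absorb_comp of_nat_mult)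
  have "0 < real ((m - 1) choose j)" "0 < real (m choose j)" using assms by simp_all
  have "newton_coeff (pderiv p) j = r * coeff p (m - j) / real ((m - 1) choose j)"
    using assms by (simp add: newton_coeff_def degree_pderiv coeff_pderiv Suc_diff_Suc r_def)
  also have "\<dots> = (r * real (m choose j)) * coeff p (m - j) / (real ((m - 1) choose j) * real (m choose j))"
    using \<open>0 < real (m choose j)\<close> by simp
  also have "\<dots> = real m * coeff p (m - j) / real (m choose j)"
    unfolding binomial using \<open>0 < real ((m - 1) choose j)\<close> by simp
  finally show ?thesis by (simp add: newton_coeff_def assms)
qed

lemma newton_coeff_reflect_poly:
  assumes "coeff p 0 \<noteq> 0" "t \<le> degree p"
  shows "newton_coeff (reflect_poly p) t = newton_coeff p (degree p - t)"
  using assms unfolding newton_coeff_def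
  by (simp add: coeff_reflect_poly binomial_symmetric[of t "degree p"])

lemma newton_inequality_of_pderiv:
  assumes "degree p = m" "i + 3 \<le> m"
    and "newton_coeff (pderiv p) i * newton_coeff (pderiv p) (i + 2) \<le> (newton_coeff (pderiv p) (i + 1))\<^sup>2"
  shows "newton_coeff p i * newton_coeff p (i + 2) \<le> (newton_coeff p (i + 1))\<^sup>2"
proof -
  have "(real m)\<^sup>2 * (newton_coeff p i * newton_coeff p (i + 2)) \<le> (real m)\<^sup>2 * (newton_coeff p (i + 1))\<^sup>2"
    using assms by (simp add: newton_coeff_pderiv power2_eq_square algebra_simps)
  moreover have "0 < (real m)\<^sup>2" using assms(2) by simp
  ultimately show ?thesis by (simp only: mult_le_cancel_left_pos)
qed

theorem newton_inequality:
  "real_rooted p \<Longrightarrow> j + 2 \<le> degree p \<Longrightarrow>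
    newton_coeff p j * newton_coeff p (j + 2) \<le> (newton_coeff p (j + 1))\<^sup>2"
proof (induction "degree p" arbitrary: p j rule: less_induct)
  case less
  define m where "m = degree p"
  show ?case
  proof (cases "m = 2")
    case True
    then show ?thesis
      using newton_inequality_degree_2[OF less.prems(1)] less.prems(2) m_def
      by (simp add: numeral_2_eq_2)
  next
    case False
    then have "3 \<le> m" using less.prems m_def by simp
    have by_pderiv: "newton_coeff q i * newton_coeff q (i + 2) \<le> (newton_coeff q (i + 1))\<^sup>2"
      if q: "real_rooted q" "degree q = m" and "i + 3 \<le> m" for q i
      using newton_inequality_of_pderiv[OF q(2) \<open>i + 3 \<le> m\<close>] less.hyps[of "pderiv q" i]
        real_rooted_pderiv[OF q(1)] q(2) \<open>3 \<le> m\<close> \<open>i + 3 \<le> m\<close> m_def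
      by (simp add: degree_pderiv)
    show ?thesis
    proof (cases "j + 3 \<le> m")
      case True
      then show ?thesis using by_pderiv less.prems m_def by blast
    next
      case False
      then have j: "j + 2 = m" using less.prems m_def by simp
      show ?thesis
      proof (cases "coeff p 0 = 0")
        case True
        then show ?thesis using j m_def by (simp add: newton_coeff_def)
      next
        case False
        \<comment> \<open>the top index is the bottom index of the reflected polynomial\<close>
        let ?r = "reflect_poly p"
        have "newton_coeff ?r 0 * newton_coeff ?r 2 \<le> (newton_coeff ?r 1)\<^sup>2"
          using by_pderiv[of ?r 0] real_rooted_reflect_poly[OF less.prems(1) False] False \<open>3 \<le> m\<close> m_def
          by (simp add: numeral_2_eq_2)
        moreover have "degree p - 2 = j" "degree p - 1 = j + 1" using j m_def by auto
        ultimately show ?thesis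
          using False j m_def \<open>3 \<le> m\<close> by (simp add: newton_coeff_reflect_poly mult.commute)
      qed
    qed
  qed
qed

lemma newton_coeff_esym_poly:
  "finite A \<Longrightarrow> t \<le> card A \<Longrightarrow> newton_coeff (esym_poly A x) t = esym_on A t x / real (card A choose t)"
  by (simp add: newton_coeff_def degree_esym_poly coeff_esym_poly)

theorem newton_inequality_esym_on:
  assumes "finite A"
  shows "real (j + 2) * real (card A - j) * (esym_on A j x * esym_on A (j + 2) x)
          \<le> real (j + 1) * real (card A - (j + 1)) * (esym_on A (j + 1) x)\<^sup>2"
proof (cases "j + 2 \<le> card A")
  case False
  then show ?thesis using esym_on_eq_0[OF assms, of "j + 2"] by simp
next
  case True
  define m where "m = card A"
  define C0 C1 C2 where "C0 = real (m choose j)" "C1 = real (m choose (j + 1))" "C2 = real (m choose (j + 2))"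
  let ?a = "esym_on A j x" and ?b = "esym_on A (j + 1) x" and ?c = "esym_on A (j + 2) x"
  have "0 < C0" "0 < C1" "0 < C2" using True m_def C0_C1_C2_def by auto
  have binomial_step: "real (m choose Suc i) * real (Suc i) = real (m choose i) * real (m - i)" for i
    using binomial_absorption[of i m] binomial_absorb_comp[of m i] by (metis of_nat_mult mult.commute)
  have "?a / C0 * (?c / C2) \<le> (?b / C1)\<^sup>2"
    using newton_inequality[OF real_rooted_esym_poly[OF assms] True[folded degree_esym_poly[OF assms, of x]]]
      True assms by (simp add: newton_coeff_esym_poly degree_esym_poly C0_C1_C2_def m_def)
  then have cleared: "?a * ?c * C1\<^sup>2 \<le> ?b\<^sup>2 * (C0 * C2)"
    using \<open>0 < C0\<close> \<open>0 < C1\<close> \<open>0 < C2\<close> by (simp add: field_simps power2_eq_square)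
  have "?a * ?c * C1\<^sup>2 * (real (j + 2) * real (m - j)) \<le> ?b\<^sup>2 * (C0 * real (m - j)) * (C2 * real (j + 2))"
    using mult_right_mono[OF cleared, of "real (j + 2) * real (m - j)"] by (simp add: mult_ac)
  also have "\<dots> = ?b\<^sup>2 * (C1 * real (j + 1)) * (C1 * real (m - (j + 1)))"
    using binomial_step[of j] binomial_step[of "j + 1"] by (simp add: C0_C1_C2_def)
  finally have "C1\<^sup>2 * (real (j + 2) * real (m - j) * (?a * ?c))
      \<le> C1\<^sup>2 * (real (j + 1) * real (m - (j + 1)) * ?b\<^sup>2)"
    by (simp add: algebra_simps power2_eq_square)
  then show ?thesis
    using \<open>0 < C1\<close> by (simp add: m_def mult_le_cancel_left_pos)
qed

corollary esym_on_newton: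
  assumes "finite A"
  shows "esym_on A j x * esym_on A (j + 2) x \<le> (esym_on A (j + 1) x)\<^sup>2"
proof (cases "esym_on A j x * esym_on A (j + 2) x \<le> 0")
  case False
  then have "j + 2 \<le> card A"
    using esym_on_eq_0[OF assms, of "j + 2" x] by fastforce
  have "real (j + 1) * real (card A - (j + 1)) \<le> real (j + 2) * real (card A - j)"
    by (intro mult_mono) auto
  then have "real (j + 2) * real (card A - j) * (esym_on A j x * esym_on A (j + 2) x)
      \<le> real (j + 2) * real (card A - j) * (esym_on A (j + 1) x)\<^sup>2"
    using newton_inequality_esym_on[OF assms, of j x]
    by (meson mult_right_mono order_trans zero_le_power2)
  moreover have "0 < real (j + 2) * real (card A - j)"
    using \<open>j + 2 \<le> card A\<close> by simp
  ultimately show ?thesis by (simp only: mult_le_cancel_left_pos)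
qed (meson order_trans zero_le_power2)

section \<open>Garding cones and the Newton-Maclaurin inequalities\<close>

definition Gamma_on :: "nat set \<Rightarrow> nat \<Rightarrow> (nat \<Rightarrow> real) set" where
  "Gamma_on A k = {x. \<forall>j. 1 \<le> j \<and> j \<le> k \<longrightarrow> 0 < esym_on A j x}"

lemma Gamma_eq_Gamma_on: "Gamma n k = Gamma_on {..<n} k"
  by (simp add: Gamma_def Gamma_on_def esym_eq_esym_on)

lemma Gamma_on_esym_on_pos: "finite A \<Longrightarrow> x \<in> Gamma_on A k \<Longrightarrow> j \<le> k \<Longrightarrow> 0 < esym_on A j x"
  unfolding Gamma_on_def by (cases "j = 0") auto

lemma Gamma_esym_pos: "x \<in> Gamma n k \<Longrightarrow> j \<le> k \<Longrightarrow> 0 < esym n j x"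
  by (simp add: Gamma_eq_Gamma_on esym_eq_esym_on Gamma_on_esym_on_pos)

lemma Gamma_on_card_le: "finite A \<Longrightarrow> x \<in> Gamma_on A k \<Longrightarrow> k \<le> card A"
  using esym_on_eq_0 Gamma_on_esym_on_pos by (metis less_irrefl not_le_imp_less)

lemma Gamma_on_mono: "x \<in> Gamma_on A k \<Longrightarrow> j \<le> k \<Longrightarrow> x \<in> Gamma_on A j"
  unfolding Gamma_on_def by auto

lemma Gamma_on_remove:
  assumes "finite A" "i \<in> A" "x \<in> Gamma_on A k"
  shows "x \<in> Gamma_on (A - {i}) (k - 1)"
proof -
  let ?e = "\<lambda>j. esym_on (A - {i}) j x"
  have positive_step: "0 < s"
    if "0 < b" "b * c \<le> s\<^sup>2" "0 < s + t * b" "0 < c + t * s" for b c s t :: real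
  proof (rule ccontr)
    assume "\<not> 0 < s"
    then have "s\<^sup>2 \<le> (t * b) * (- s)"
      using that(3) mult_right_mono[of "- s" "t * b" "- s"] by (simp add: power2_eq_square)
    also have "\<dots> = b * (- (t * s))" by simp
    also have "\<dots> < b * c" using that(1,4) mult_strict_left_mono[of "- (t * s)" c b] by simp
    finally show False using that(2) by simp
  qed
  have "0 < ?e j" if "j < k" for j
    using that
  proof (induction j)
    case (Suc j)
    have "0 < ?e j" using Suc by simp
    moreover have "?e j * ?e (Suc (Suc j)) \<le> (?e (Suc j))\<^sup>2"
      using esym_on_newton[of "A - {i}" j x] assms(1) by simp
    moreover have "0 < ?e (Suc j) + x i * ?e j" "0 < ?e (Suc (Suc j)) + x i * ?e (Suc j)"
      using Gamma_on_esym_on_pos[OF assms(1,3)] Suc.prems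
      by (simp_all add: esym_on_remove[OF assms(1,2), symmetric])
    ultimately show ?case by (rule positive_step)
  qed (use assms(1) in simp)
  then show ?thesis unfolding Gamma_on_def by auto
qed

theorem newton_maclaurin:
  assumes "finite A" "x \<in> Gamma_on A K" "1 \<le> l" "l \<le> k" "k \<le> K"
  shows "real k * real (card A - l + 1) * (esym_on A k x * esym_on A (l - 1) x)
         \<le> real l * real (card A - k + 1) * (esym_on A l x * esym_on A (k - 1) x)"
proof -
  define m where "m = card A"
  let ?e = "\<lambda>j. esym_on A j x"
  have "K \<le> m" using Gamma_on_card_le[OF assms(1,2)] m_def by simp
  have pos: "0 < ?e j" if "j \<le> K" for j
    using Gamma_on_esym_on_pos[OF assms(1,2) that] .
  have frac_le: "a / b \<le> c / d \<longleftrightarrow> a * d \<le> c * b" if "0 < b" "0 < d" for a b c d :: real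
    using that by (simp add: field_simps)
  define t where "t j = real (Suc j) * ?e (Suc j) / (real (m - j) * ?e j)" for j
  have t_step: "t (Suc j) \<le> t j" if "Suc (Suc j) \<le> K" for j
  proof -
    have "real (j + 2) * real (m - j) * (?e j * ?e (j + 2)) \<le> real (j + 1) * real (m - (j + 1)) * (?e (j + 1))\<^sup>2"
      using newton_inequality_esym_on[OF assms(1), of j x] m_def by simp
    then have "real (Suc (Suc j)) * ?e (Suc (Suc j)) * (real (m - j) * ?e j)
        \<le> real (Suc j) * ?e (Suc j) * (real (m - Suc j) * ?e (Suc j))"
      by (simp add: power2_eq_square mult_ac)
    moreover have "0 < real (m - Suc j) * ?e (Suc j)" "0 < real (m - j) * ?e j"
      using pos that \<open>K \<le> m\<close> by simp_all
    ultimately show ?thesis unfolding t_def by (simp only: frac_le)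
  qed
  have "t i \<le> t h" if "h \<le> i" "Suc i \<le> K" for h i
    using that by (induction i rule: dec_induct) (auto intro: order_trans t_step)
  from this[of "l - 1" "k - 1"] have "t (k - 1) \<le> t (l - 1)"
    using assms(3-5) by simp
  moreover have "0 < real (m - (k - 1)) * ?e (k - 1)" "0 < real (m - (l - 1)) * ?e (l - 1)"
    using pos assms(3-5) \<open>K \<le> m\<close> by simp_all
  moreover have "Suc (k - 1) = k" "Suc (l - 1) = l" "m - (k - 1) = m - k + 1" "m - (l - 1) = m - l + 1"
    using assms(3-5) \<open>K \<le> m\<close> by simp_all
  ultimately have "real k * ?e k * (real (m - l + 1) * ?e (l - 1)) \<le> real l * ?e l * (real (m - k + 1) * ?e (k - 1))"
    unfolding t_def by (simp only: frac_le)
  then show ?thesis unfolding m_def by (simp add: mult_ac)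
qed

corollary newton_maclaurin_weak:
  assumes "finite A" "x \<in> Gamma_on A K" "1 \<le> l" "l \<le> k" "k \<le> K"
  shows "real k * (esym_on A k x * esym_on A (l - 1) x) \<le> real l * (esym_on A l x * esym_on A (k - 1) x)"
proof -
  have "0 < esym_on A l x * esym_on A (k - 1) x"
    using Gamma_on_esym_on_pos[OF assms(1,2)] assms(4,5) by simp
  then have "real l * real (card A - k + 1) * (esym_on A l x * esym_on A (k - 1) x)
      \<le> real l * real (card A - l + 1) * (esym_on A l x * esym_on A (k - 1) x)"
    using assms(4) by (intro mult_right_mono mult_left_mono) auto
  from order_trans[OF newton_maclaurin[OF assms] this]
  have "real (card A - l + 1) * (real k * (esym_on A k x * esym_on A (l - 1) x))
      \<le> real (card A - l + 1) * (real l * (esym_on A l x * esym_on A (k - 1) x))"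
    by (simp add: mult_ac)
  moreover have "0 < real (card A - l + 1)" by simp
  ultimately show ?thesis by (simp only: mult_le_cancel_left_pos)
qed

lemma esym_on_ratio_ge_min:
  assumes "finite A" "x \<in> Gamma_on A k" "l < k"
  shows "min 1 (esym_on A k x / esym_on A l x) \<le> esym_on A (k - 1) x / esym_on A l x"
proof -
  let ?e = "\<lambda>j. esym_on A j x"
  have pos: "0 < ?e j" if "j \<le> k" for j
    using Gamma_on_esym_on_pos[OF assms(1,2) that] .
  show ?thesis
  proof (cases "?e (k - 1) \<le> ?e k")
    case True
    \<comment> \<open>then Newton-Maclaurin makes e_l, ..., e_(k-1) nondecreasing\<close>
    have "?e l \<le> ?e j" if "l \<le> j" "j \<le> k - 1" for j
      using that
    proof (induction j rule: dec_induct)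
      case (step j)
      have "Suc j \<le> k" "0 < ?e j" "0 < ?e (k - 1)" using step pos by auto
      have "real k * (?e k * ?e j) \<le> real (Suc j) * (?e (Suc j) * ?e (k - 1))"
        using newton_maclaurin_weak[OF assms(1,2), of "Suc j" k] step by simp
      also have "\<dots> \<le> real k * (?e (Suc j) * ?e (k - 1))"
        using \<open>Suc j \<le> k\<close> pos[of "Suc j"] \<open>0 < ?e (k - 1)\<close> by (intro mult_right_mono) simp_all
      finally have "?e k * ?e j \<le> ?e (Suc j) * ?e (k - 1)"
        using assms(3) by (simp add: mult_le_cancel_left_pos)
      moreover have "?e (k - 1) * ?e j \<le> ?e k * ?e j"
        using True \<open>0 < ?e j\<close> by (simp add: mult_right_mono)
      ultimately have "?e (k - 1) * ?e j \<le> ?e (k - 1) * ?e (Suc j)" by (simp add: mult.commute)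
      then show ?case using \<open>0 < ?e (k - 1)\<close> step by simp
    qed simp
    then have "1 \<le> ?e (k - 1) / ?e l" using pos[of l] assms(3) by simp
    then show ?thesis by simp
  next
    case False
    then show ?thesis using pos[of l] assms(3) by (simp add: min_le_iff_disj divide_right_mono)
  qed
qed

section \<open>Removing the second smallest entry\<close>

lemma esym_on_Suc_lower_bound:
  assumes "finite V" "0 \<le> t" "\<And>p. p \<in> V \<Longrightarrow> t \<le> x p"
  shows "t * (real (card V) - real i) * esym_on V i x \<le> real (Suc i) * esym_on V (Suc i) x"
proof -
  have "t * (real (card V) - real i) * esym_on V i x = (\<Sum>p\<in>V. t * esym_on (V - {p}) i x)"
    by (simp add: sum_distrib_left[symmetric] sum_esym_on_remove[OF assms(1)] mult.assoc)
  also have "\<dots> \<le> (\<Sum>p\<in>V. x p * esym_on (V - {p}) i x)"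
    using assms by (intro sum_mono mult_right_mono esym_on_nonneg) (auto intro: order_trans)
  finally show ?thesis by (simp add: sum_mult_esym_on_remove[OF assms(1)])
qed

lemma esym_on_shift_le:
  assumes "finite V" "0 \<le> t" "\<And>p. p \<in> V \<Longrightarrow> t \<le> x p" "i < j" "j \<le> card V"
  shows "t * esym_on V i x \<le> real j / real (card V + 1 - j) * esym_on V (Suc i) x"
proof -
  have "0 < real (card V) - real i" using assms(4,5) by simp
  have "t * esym_on V i x \<le> real (Suc i) / (real (card V) - real i) * esym_on V (Suc i) x"
    using esym_on_Suc_lower_bound[OF assms(1-3), where i = i] \<open>0 < real (card V) - real i\<close>
    by (simp add: field_simps)
  also have "\<dots> \<le> real j / real (card V + 1 - j) * esym_on V (Suc i) x"
  proof (intro mult_right_mono frac_le)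
    show "0 \<le> esym_on V (Suc i) x"
      using assms(1-3) by (intro esym_on_nonneg) (auto intro: order_trans)
  qed (use assms(4,5) in \<open>simp_all add: of_nat_diff\<close>)
  finally show ?thesis .
qed

lemma esym_on_insert_nonneg_bound:
  assumes "finite V" "a \<notin> V" "0 \<le> x a" "0 \<le> t" "\<And>p. p \<in> V \<Longrightarrow> t \<le> x p" "Suc i \<le> card V"
  shows "t * esym_on (insert a V) i x \<le> real (Suc i) / real (card V - i) * esym_on (insert a V) (Suc i) x"
proof -
  let ?q = "real (Suc i) / real (card V - i)"
  have shift: "t * esym_on V h x \<le> ?q * esym_on V (Suc h) x" if "h \<le> i" for h
    using esym_on_shift_le[OF assms(1,4,5), where i = h and j = "Suc i"] that assms(6) by simp
  show ?thesis
  proof (cases i)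
    case 0
    have "0 \<le> ?q * x a" using assms(3) by simp
    then show ?thesis
      using shift[of 0] assms(1,2) 0 by (simp add: esym_on_insert distrib_left)
  next
    case (Suc h)
    have "t * esym_on (insert a V) i x = t * esym_on V i x + x a * (t * esym_on V h x)"
      using Suc assms(1,2) by (simp add: esym_on_insert algebra_simps)
    also have "\<dots> \<le> ?q * esym_on V (Suc i) x + x a * (?q * esym_on V i x)"
      using shift[of i] shift[of h] Suc assms(3) by (intro add_mono mult_left_mono) simp_all
    also have "\<dots> = ?q * esym_on (insert a V) (Suc i) x"
      using assms(1,2) by (simp add: esym_on_insert algebra_simps)
    finally show ?thesis .
  qed
qed

lemma esym_on_insert_neg_bound:
  assumes "finite V" "a \<notin> V" "x a < 0" "0 < t" "\<And>p. p \<in> V \<Longrightarrow> t \<le> x p" "Suc i \<le> card V"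
    and "0 < esym_on (insert a V) (Suc i) x"
    and pos: "0 < esym_on (insert a V) (Suc (Suc i)) x + t * esym_on (insert a V) (Suc i) x"
  shows "esym_on V (Suc i) x \<le> real (Suc (Suc i)) * esym_on (insert a V) (Suc i) x"
proof -
  define P Q R D where "P = esym_on V i x" "Q = esym_on V (Suc i) x" "R = esym_on V (Suc (Suc i)) x"
    "D = esym_on (insert a V) (Suc i) x"
  define \<alpha> \<beta> where "\<alpha> = real (Suc i)" "\<beta> = real (card V - i)"
  have "0 < \<beta>" "0 \<le> \<alpha>" using assms(6) by (simp_all add: \<alpha>_\<beta>_def)
  have "0 < D" using assms(7) by (simp add: P_Q_R_D_def)
  have "0 < x p" if "p \<in> V" for p
    using assms(4,5) that by (meson less_le_trans)
  then have "0 < P" "0 < Q"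
    unfolding P_Q_R_D_def using assms(6) by (intro esym_on_pos[OF assms(1)]; simp)+
  have "D - Q = x a * P"
    using assms(1,2) by (simp add: esym_on_insert P_Q_R_D_def)
  have "0 < P * (R + x a * Q + t * D)"
    using pos assms(1,2) \<open>0 < P\<close> by (simp add: esym_on_insert P_Q_R_D_def)
  then have main: "0 < P * R + (D - Q) * Q + t * P * D"
    unfolding \<open>D - Q = x a * P\<close> by (simp add: algebra_simps)
  have newton: "(\<alpha> + 1) * \<beta> * (P * R) \<le> \<alpha> * (\<beta> - 1) * Q\<^sup>2"
    using newton_inequality_esym_on[OF assms(1), of i x] assms(6)
    by (simp add: P_Q_R_D_def \<alpha>_\<beta>_def of_nat_diff algebra_simps)
  have shift: "t * P * \<beta> \<le> \<alpha> * Q"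
    using esym_on_shift_le[OF assms(1) _ assms(5), where i = i and j = "Suc i"] assms(4,6) \<open>0 < \<beta>\<close>
    by (simp add: P_Q_R_D_def \<alpha>_\<beta>_def field_simps)
  \<comment> \<open>the positivity hypothesis, weighed against Newton's inequality on V, forces Q < (\<alpha> + 1) D\<close>
  have "0 < (\<alpha> + 1) * \<beta> * (P * R + (D - Q) * Q + t * P * D)"
    using main \<open>0 < \<beta>\<close> \<open>0 \<le> \<alpha>\<close> by simp
  also have "\<dots> = (\<alpha> + 1) * \<beta> * (P * R) + (\<alpha> + 1) * \<beta> * ((D - Q) * Q) + (\<alpha> + 1) * (t * P * \<beta>) * D"
    by (simp add: algebra_simps)
  also have "\<dots> \<le> \<alpha> * (\<beta> - 1) * Q\<^sup>2 + (\<alpha> + 1) * \<beta> * ((D - Q) * Q) + (\<alpha> + 1) * (\<alpha> * Q) * D"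
  proof -
    have "(\<alpha> + 1) * (t * P * \<beta>) * D \<le> (\<alpha> + 1) * (\<alpha> * Q) * D"
      using shift \<open>0 < D\<close> \<open>0 \<le> \<alpha>\<close> by (intro mult_right_mono mult_left_mono) simp_all
    with newton show ?thesis by linarith
  qed
  also have "\<dots> = (\<alpha> + \<beta>) * Q * ((\<alpha> + 1) * D - Q)"
    by (simp add: algebra_simps power2_eq_square)
  finally have "0 < (\<alpha> + \<beta>) * Q * ((\<alpha> + 1) * D - Q)" .
  moreover have "0 < (\<alpha> + \<beta>) * Q" using \<open>0 < \<beta>\<close> \<open>0 \<le> \<alpha>\<close> \<open>0 < Q\<close> by simp
  ultimately have "Q < (\<alpha> + 1) * D" by (simp add: zero_less_mult_iff)
  then show ?thesis by (simp add: P_Q_R_D_def \<alpha>_\<beta>_def)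
qed

lemma esym_on_insert_bound:
  assumes "finite V" "a \<notin> V" "0 < t" "\<And>p. p \<in> V \<Longrightarrow> t \<le> x p" "Suc i \<le> card V"
    and "0 < esym_on (insert a V) (Suc i) x"
    and pos: "0 < esym_on (insert a V) (Suc (Suc i)) x + t * esym_on (insert a V) (Suc i) x"
  shows "t * esym_on (insert a V) i x
    \<le> real (Suc i) * real (Suc (Suc i)) / real (card V - i) * esym_on (insert a V) (Suc i) x"
proof (cases "0 \<le> x a")
  case True
  have "0 \<le> x p" if "p \<in> V" for p
    using assms(3,4) that by (meson less_imp_le order_trans)
  then have "0 \<le> esym_on (insert a V) (Suc i) x"
    using assms(1) True by (intro esym_on_nonneg) auto
  then have "real (Suc i) / real (card V - i) * esym_on (insert a V) (Suc i) x
      \<le> real (Suc i) * real (Suc (Suc i)) / real (card V - i) * esym_on (insert a V) (Suc i) x"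
    by (intro mult_right_mono divide_right_mono) simp_all
  moreover have "t * esym_on (insert a V) i x \<le> real (Suc i) / real (card V - i) * esym_on (insert a V) (Suc i) x"
    by (rule esym_on_insert_nonneg_bound) (use assms True in auto)
  ultimately show ?thesis by simp
next
  case False
  have "esym_on (insert a V) i x \<le> esym_on V i x"
  proof (cases i)
    case (Suc h)
    have "0 \<le> esym_on V h x"
      using assms(1,3,4) by (intro esym_on_nonneg) (auto intro: order_trans less_imp_le)
    then show ?thesis using Suc False assms(1,2) by (simp add: esym_on_insert mult_nonpos_nonneg)
  qed (use assms(1) in simp)
  then have "t * esym_on (insert a V) i x \<le> t * esym_on V i x"
    using assms(3) by simp
  also have "\<dots> \<le> real (Suc i) / real (card V - i) * esym_on V (Suc i) x"
    using esym_on_shift_le[OF assms(1) _ assms(4), where i = i and j = "Suc i"] assms(3,5) by simp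
  also have "\<dots> \<le> real (Suc i) / real (card V - i) * (real (Suc (Suc i)) * esym_on (insert a V) (Suc i) x)"
    using esym_on_insert_neg_bound[OF assms(1,2) _ assms(3-6) pos] False
    by (intro mult_left_mono) simp_all
  finally show ?thesis by (simp add: mult.assoc)
qed

definition esym_remove_const :: "nat \<Rightarrow> nat \<Rightarrow> real" where
  "esym_remove_const n j = 1 + real j * real (j + 1) / real (n - 1 - j)"

lemma esym_remove_const_ge_1: "1 \<le> esym_remove_const n j"
  by (simp add: esym_remove_const_def)

lemma esym_on_le_remove_second_smallest:
  assumes "finite A" "x \<in> Gamma_on A (Suc j)" "j + 2 \<le> card A"
    and "a \<in> A" "b \<in> A" "a \<noteq> b" "\<And>p. p \<in> A - {a, b} \<Longrightarrow> x b \<le> x p"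
  shows "esym_on A j x \<le> esym_remove_const (card A) j * esym_on (A - {b}) j x"
proof (cases j)
  case (Suc i)
  define V where "V = A - {a, b}"
  have B: "A - {b} = insert a V" and "a \<notin> V" "finite V" "card V = card A - 2"
    using assms(1,4-6) by (auto simp: V_def card_Diff_subset)
  have "x \<in> Gamma_on (A - {b}) j"
    using Gamma_on_remove[OF assms(1,5,2)] by simp
  then have "0 < esym_on (A - {b}) j x" "0 < esym_on (A - {b}) i x"
    using Gamma_on_esym_on_pos[of "A - {b}" x j] assms(1) Suc by auto
  have "esym_on A j x = esym_on (A - {b}) j x + x b * esym_on (A - {b}) i x"
    using esym_on_remove[OF assms(1,5)] Suc by simp
  also have "\<dots> \<le> esym_on (A - {b}) j x + real j * real (j + 1) / real (card A - 1 - j) * esym_on (A - {b}) j x"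
  proof (cases "0 < x b")
    case True
    have "0 < esym_on A (Suc j) x"
      using Gamma_on_esym_on_pos[OF assms(1,2)] by simp
    then have "0 < esym_on (insert a V) (Suc (Suc i)) x + x b * esym_on (insert a V) (Suc i) x"
      using esym_on_remove[OF assms(1,5), of j] Suc B by simp
    moreover have "0 < esym_on (insert a V) (Suc i) x"
      using \<open>0 < esym_on (A - {b}) j x\<close> B Suc by simp
    moreover have "Suc i \<le> card V" using assms(3) Suc \<open>card V = card A - 2\<close> by simp
    moreover have "x b \<le> x p" if "p \<in> V" for p using assms(7) that by (simp add: V_def)
    ultimately have "x b * esym_on (insert a V) i x
        \<le> real (Suc i) * real (Suc (Suc i)) / real (card V - i) * esym_on (insert a V) (Suc i) x"
      using esym_on_insert_bound[OF \<open>finite V\<close> \<open>a \<notin> V\<close> True] by blast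
    moreover have "card V - i = card A - 1 - j" using \<open>card V = card A - 2\<close> Suc by simp
    ultimately show ?thesis using Suc B by simp
  next
    case False
    then have "x b * esym_on (A - {b}) i x \<le> 0"
      using \<open>0 < esym_on (A - {b}) i x\<close> by (simp add: mult_nonpos_nonneg)
    moreover have "0 \<le> real j * real (j + 1) / real (card A - 1 - j) * esym_on (A - {b}) j x"
      using \<open>0 < esym_on (A - {b}) j x\<close> by simp
    ultimately show ?thesis by (meson add_left_mono order_trans)
  qed
  finally show ?thesis by (simp add: esym_remove_const_def algebra_simps)
qed (use assms(1) in \<open>simp add: esym_remove_const_def\<close>)

section \<open>Derivatives of the quotient sigma_k / sigma_l\<close>

definition esym_quot_partial :: "nat set \<Rightarrow> nat \<Rightarrow> nat \<Rightarrow> (nat \<Rightarrow> real) \<Rightarrow> nat \<Rightarrow> real" where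
  "esym_quot_partial A k l y p =
    (esym_on_partial A k y p * esym_on A l y - esym_on A k y * esym_on_partial A l y p) / (esym_on A l y)\<^sup>2"

lemma esym_on_quotient_line_has_derivative:
  assumes "finite A" "esym_on A l (\<lambda>i. x i + t0 * v i) \<noteq> 0"
  shows "((\<lambda>t. esym_on A k (\<lambda>i. x i + t * v i) / esym_on A l (\<lambda>i. x i + t * v i)) has_real_derivative
           (\<Sum>p\<in>A. v p * esym_quot_partial A k l (\<lambda>i. x i + t0 * v i) p)) (at t0)"
proof -
  let ?y = "\<lambda>i. x i + t0 * v i"
  have quotient_rule: "((\<Sum>p\<in>A. v p * esym_on_partial A k ?y p) * esym_on A l ?y
        - esym_on A k ?y * (\<Sum>p\<in>A. v p * esym_on_partial A l ?y p)) / (esym_on A l ?y * esym_on A l ?y)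
      = (\<Sum>p\<in>A. v p * esym_quot_partial A k l ?y p)"
  proof -
    have "(\<Sum>p\<in>A. v p * esym_quot_partial A k l ?y p)
        = (\<Sum>p\<in>A. (v p * esym_on_partial A k ?y p * esym_on A l ?y
            - esym_on A k ?y * (v p * esym_on_partial A l ?y p)) / (esym_on A l ?y * esym_on A l ?y))"
      by (intro sum.cong) (simp_all add: esym_quot_partial_def power2_eq_square algebra_simps)
    then show ?thesis
      by (simp add: sum_divide_distrib[symmetric] sum_subtractf sum_distrib_left sum_distrib_right)
  qed
  have "((\<lambda>t. esym_on A k (\<lambda>i. x i + t * v i) / esym_on A l (\<lambda>i. x i + t * v i)) has_real_derivative
      ((\<Sum>p\<in>A. v p * esym_on_partial A k ?y p) * esym_on A l ?y
        - esym_on A k ?y * (\<Sum>p\<in>A. v p * esym_on_partial A l ?y p)) / (esym_on A l ?y * esym_on A l ?y)) (at t0)"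
    using assms by (intro DERIV_divide esym_on_line_has_derivative)
  then show ?thesis by (simp only: quotient_rule)
qed

lemma lam_fun_upd:
  assumes "i < n"
  shows "lam \<theta> \<mu> n (\<kappa>(i := t)) p = lam \<theta> \<mu> n \<kappa> p + (t - \<kappa> i) * (\<theta> - (if p = i then \<mu> else 0))"
proof -
  have "(\<Sum>j<n. (\<kappa>(i := t)) j) = (\<Sum>j<n. \<kappa> j + (if j = i then t - \<kappa> i else 0))"
    by (intro sum.cong) auto
  also have "\<dots> = (\<Sum>j<n. \<kappa> j) + (t - \<kappa> i)"
    using assms by (simp add: sum.distrib)
  finally have "\<theta> * (\<Sum>j<n. (\<kappa>(i := t)) j) = \<theta> * ((\<Sum>j<n. \<kappa> j) + (t - \<kappa> i))" by simp
  then show ?thesis unfolding lam_def by (auto simp: algebra_simps)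
qed

lemma Fii_eq_esym_quot_partial:
  assumes "i < n" "esym n l (lam \<theta> \<mu> n \<kappa>) \<noteq> 0"
  shows "Fii n k l \<theta> \<mu> \<kappa> i
    = \<theta> * (\<Sum>p<n. esym_quot_partial {..<n} k l (lam \<theta> \<mu> n \<kappa>) p) - \<mu> * esym_quot_partial {..<n} k l (lam \<theta> \<mu> n \<kappa>) i"
proof -
  let ?y = "lam \<theta> \<mu> n \<kappa>"
  define v where "v p = \<theta> - (if p = i then \<mu> else 0)" for p
  define x where "x p = ?y p - \<kappa> i * v p" for p
  have line: "lam \<theta> \<mu> n (\<kappa>(i := t)) = (\<lambda>p. x p + t * v p)" for t
    using assms(1) by (auto simp: lam_fun_upd x_def v_def algebra_simps)
  have "(\<lambda>p. x p + \<kappa> i * v p) = ?y" by (auto simp: x_def)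
  then have "((\<lambda>t. Fq n k l \<theta> \<mu> (\<kappa>(i := t))) has_real_derivative
      (\<Sum>p<n. v p * esym_quot_partial {..<n} k l ?y p)) (at (\<kappa> i))"
    using esym_on_quotient_line_has_derivative[of "{..<n}" l x "\<kappa> i" v k] assms(2)
    by (simp add: Fq_def line esym_eq_esym_on)
  then have "Fii n k l \<theta> \<mu> \<kappa> i = (\<Sum>p<n. v p * esym_quot_partial {..<n} k l ?y p)"
    unfolding Fii_def by (rule DERIV_imp_deriv)
  also have "\<dots> = (\<Sum>p<n. \<theta> * esym_quot_partial {..<n} k l ?y p - (if p = i then \<mu> * esym_quot_partial {..<n} k l ?y p else 0))"
    by (intro sum.cong) (simp_all add: v_def algebra_simps)
  also have "\<dots> = \<theta> * (\<Sum>p<n. esym_quot_partial {..<n} k l ?y p) - \<mu> * esym_quot_partial {..<n} k l ?y i"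
    using assms(1) by (simp add: sum_subtractf sum_distrib_left)
  finally show ?thesis .
qed

lemma esym_quot_partial_lower_bound:
  assumes "finite A" "p \<in> A" "y \<in> Gamma_on A k" "l < k"
  shows "(1 - real l / real k) * (esym_on (A - {p}) (k - 1) y * esym_on (A - {p}) l y)
    \<le> esym_quot_partial A k l y p * (esym_on A l y)\<^sup>2"
proof -
  let ?e = "\<lambda>j. esym_on (A - {p}) j y"
  have "y \<in> Gamma_on (A - {p}) (k - 1)" by (rule Gamma_on_remove[OF assms(1-3)])
  then have pos: "0 < ?e j" if "j \<le> k - 1" for j
    using Gamma_on_esym_on_pos[of "A - {p}"] assms(1) that by simp
  have "0 < esym_on A l y" using Gamma_on_esym_on_pos[OF assms(1,3)] assms(4) by simp
  then have qd: "esym_quot_partial A k l y p * (esym_on A l y)\<^sup>2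
      = ?e (k - 1) * esym_on A l y - esym_on A k y * esym_on_partial A l y p"
    using assms(4) by (simp add: esym_quot_partial_def esym_on_partial_def)
  show ?thesis
  proof (cases l)
    case 0
    then show ?thesis using qd assms(1) by (simp add: esym_on_partial_def)
  next
    case (Suc i)
    \<comment> \<open>the terms containing y_p cancel\<close>
    have "esym_quot_partial A k l y p * (esym_on A l y)\<^sup>2 = ?e (k - 1) * ?e l - ?e k * ?e i"
      using qd Suc assms(4) esym_on_remove[OF assms(1,2), of i y] esym_on_remove[OF assms(1,2), of "k - 1" y]
      by (simp add: esym_on_partial_def algebra_simps)
    moreover have "?e k * ?e i \<le> real l / real k * (?e (k - 1) * ?e l)"
    proof (cases "0 < ?e k")
      case True
      have "0 < ?e j" if "j \<le> k" for j
        using pos[of j] True that by (cases "j = k") auto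
      then have "y \<in> Gamma_on (A - {p}) k" unfolding Gamma_on_def by simp
      then have "real k * (?e k * ?e i) \<le> real l * (?e (k - 1) * ?e l)"
        using newton_maclaurin_weak[of "A - {p}" y k l k] assms(1,4) Suc by (simp add: mult.commute)
      then show ?thesis using assms(4) by (simp add: field_simps)
    next
      case False
      have "0 < ?e i" "0 < ?e l" "0 < ?e (k - 1)" using pos assms(4) Suc by simp_all
      then have "?e k * ?e i \<le> 0" "0 \<le> real l / real k * (?e (k - 1) * ?e l)"
        using False by (simp_all add: mult_nonpos_nonneg)
      then show ?thesis by linarith
    qed
    ultimately show ?thesis by (simp add: left_diff_distrib)
  qed
qed

lemma esym_quot_partial_nonneg:
  assumes "finite A" "p \<in> A" "y \<in> Gamma_on A k" "l < k"
  shows "0 \<le> esym_quot_partial A k l y p"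
proof -
  have "y \<in> Gamma_on (A - {p}) (k - 1)" by (rule Gamma_on_remove[OF assms(1-3)])
  then have "0 < esym_on (A - {p}) (k - 1) y" "0 < esym_on (A - {p}) l y"
    using Gamma_on_esym_on_pos[of "A - {p}"] assms(1,4) by simp_all
  moreover have "0 \<le> 1 - real l / real k" using assms(4) by simp
  ultimately have "0 \<le> esym_quot_partial A k l y p * (esym_on A l y)\<^sup>2"
    using esym_quot_partial_lower_bound[OF assms] by (meson order_trans mult_nonneg_nonneg less_imp_le)
  moreover have "0 < esym_on A l y" using Gamma_on_esym_on_pos[OF assms(1,3)] assms(4) by simp
  ultimately show ?thesis by (simp add: zero_le_mult_iff)
qed

lemma sum_esym_quot_partial_eq:
  assumes "finite A" "y \<in> Gamma_on A k" "l < k"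
  shows "(\<Sum>p\<in>A. esym_quot_partial A k l y p) * (esym_on A l y)\<^sup>2
    = (real (card A) - real k + 1) * esym_on A (k - 1) y * esym_on A l y
      - (if l = 0 then 0 else (real (card A) - real l + 1) * esym_on A k y * esym_on A (l - 1) y)"
proof -
  have "0 < esym_on A l y" using Gamma_on_esym_on_pos[OF assms(1,2)] assms(3) by simp
  then have "(\<Sum>p\<in>A. esym_quot_partial A k l y p) * (esym_on A l y)\<^sup>2
      = (\<Sum>p\<in>A. esym_on_partial A k y p) * esym_on A l y - esym_on A k y * (\<Sum>p\<in>A. esym_on_partial A l y p)"
    by (simp add: esym_quot_partial_def sum_divide_distrib[symmetric] sum_subtractf sum_distrib_left
        sum_distrib_right)
  then show ?thesis
    using assms(1,3) Gamma_on_card_le[OF assms(1,2)]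
    by (auto simp: sum_esym_on_partial of_nat_diff algebra_simps)
qed

lemma sum_esym_quot_partial_bounds:
  assumes "finite A" "y \<in> Gamma_on A k" "l < k"
  defines "r \<equiv> esym_on A (k - 1) y / esym_on A l y"
  shows "(real (card A) - real k + 1) * (1 - real l / real k) * r \<le> (\<Sum>p\<in>A. esym_quot_partial A k l y p)"
    and "(\<Sum>p\<in>A. esym_quot_partial A k l y p) \<le> (real (card A) - real k + 1) * r"
proof -
  let ?e = "\<lambda>j. esym_on A j y" and ?S = "\<Sum>p\<in>A. esym_quot_partial A k l y p"
  let ?c = "real (card A) - real k + 1"
  define X where "X = (if l = 0 then 0 else (real (card A) - real l + 1) * ?e k * ?e (l - 1))"
  have pos: "0 < ?e j" if "j \<le> k" for j
    using Gamma_on_esym_on_pos[OF assms(1,2) that] .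
  have "k \<le> card A" using Gamma_on_card_le[OF assms(1,2)] .
  have S: "?S * (?e l)\<^sup>2 = ?c * ?e (k - 1) * ?e l - X"
    using sum_esym_quot_partial_eq[OF assms(1-3)] by (simp add: X_def)
  have "0 \<le> X"
    unfolding X_def using pos[of k] pos[of "l - 1"] \<open>k \<le> card A\<close> assms(3)
    by (auto intro!: mult_nonneg_nonneg less_imp_le)
  have "X \<le> ?c * (real l / real k) * (?e (k - 1) * ?e l)"
  proof (cases "l = 0")
    case False
    then have "real k * X \<le> real l * ?c * (?e l * ?e (k - 1))"
      using newton_maclaurin[OF assms(1,2), of l k] assms(3) \<open>k \<le> card A\<close>
      by (simp add: X_def of_nat_diff algebra_simps)
    then show ?thesis using assms(3) by (simp add: field_simps)
  qed (use pos[of k] pos[of "k - 1"] \<open>k \<le> card A\<close> in \<open>simp add: X_def\<close>)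
  have "0 < (?e l)\<^sup>2" using pos[of l] assms(3) by simp
  have "?c * (1 - real l / real k) * r * (?e l)\<^sup>2
      = ?c * ?e (k - 1) * ?e l - ?c * (real l / real k) * (?e (k - 1) * ?e l)"
    using pos[of l] assms(3) by (simp add: r_def power2_eq_square field_simps)
  also have "\<dots> \<le> ?S * (?e l)\<^sup>2"
    using S \<open>X \<le> ?c * (real l / real k) * (?e (k - 1) * ?e l)\<close> by linarith
  finally show "?c * (1 - real l / real k) * r \<le> ?S"
    using \<open>0 < (?e l)\<^sup>2\<close> by (rule mult_right_le_imp_le)
  have "?S * (?e l)\<^sup>2 \<le> ?c * ?e (k - 1) * ?e l"
    using S \<open>0 \<le> X\<close> by linarith
  also have "\<dots> = ?c * r * (?e l)\<^sup>2"
    using pos[of l] assms(3) by (simp add: r_def power2_eq_square)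
  finally show "?S \<le> ?c * r"
    using \<open>0 < (?e l)\<^sup>2\<close> by (rule mult_right_le_imp_le)
qed

definition esym_quot_partial_const :: "nat \<Rightarrow> nat \<Rightarrow> nat \<Rightarrow> real" where
  "esym_quot_partial_const n k l = (1 - real l / real k)
     / (esym_remove_const n (k - 1) * esym_remove_const n l * (real n - real k + 1))"

lemma esym_quot_partial_const_pos_le_1:
  assumes "l < k" "k < n"
  shows "0 < esym_quot_partial_const n k l" "esym_quot_partial_const n k l \<le> 1"
proof -
  have "1 \<le> esym_remove_const n (k - 1) * esym_remove_const n l * (real n - real k + 1)"
    using assms by (intro mult_ge1_I esym_remove_const_ge_1) simp_all
  moreover have "0 < 1 - real l / real k" "1 - real l / real k \<le> 1" using assms by simp_all
  ultimately have "0 < 1 - real l / real k"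
    "1 - real l / real k \<le> esym_remove_const n (k - 1) * esym_remove_const n l * (real n - real k + 1)"
    by linarith+
  then show "0 < esym_quot_partial_const n k l" "esym_quot_partial_const n k l \<le> 1"
    unfolding esym_quot_partial_const_def by (simp_all add: divide_le_eq_1)
qed

lemma esym_on_mult_le_remove_second_smallest:
  assumes "finite A" "y \<in> Gamma_on A k" "l < k" "k < card A"
    and "a \<in> A" "b \<in> A" "a \<noteq> b" "\<And>p. p \<in> A - {a, b} \<Longrightarrow> y b \<le> y p"
  shows "esym_on A (k - 1) y * esym_on A l y
    \<le> (esym_remove_const (card A) (k - 1) * esym_remove_const (card A) l)
      * (esym_on (A - {b}) (k - 1) y * esym_on (A - {b}) l y)"
proof -
  have "esym_on A (k - 1) y \<le> esym_remove_const (card A) (k - 1) * esym_on (A - {b}) (k - 1) y"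
    using assms(2-4) by (intro esym_on_le_remove_second_smallest[where x = y, OF assms(1) _ _ assms(5-8)]) simp_all
  moreover have "esym_on A l y \<le> esym_remove_const (card A) l * esym_on (A - {b}) l y"
    using assms(3,4) Gamma_on_mono[OF assms(2), of "Suc l"]
    by (intro esym_on_le_remove_second_smallest[where x = y, OF assms(1) _ _ assms(5-8)]) simp_all
  moreover have "0 < esym_on (A - {b}) (k - 1) y" "0 < esym_on A l y"
    using Gamma_on_esym_on_pos[OF _ Gamma_on_remove[OF assms(1,6,2)]] Gamma_on_esym_on_pos[OF assms(1,2)]
      assms(1,3) by simp_all
  moreover have "0 \<le> esym_remove_const (card A) (k - 1) * esym_on (A - {b}) (k - 1) y"
    using esym_remove_const_ge_1[of "card A" "k - 1"] calculation(3) by simp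
  ultimately have "esym_on A (k - 1) y * esym_on A l y
      \<le> (esym_remove_const (card A) (k - 1) * esym_on (A - {b}) (k - 1) y)
        * (esym_remove_const (card A) l * esym_on (A - {b}) l y)"
    by (intro mult_mono) simp_all
  then show ?thesis by (simp add: mult_ac)
qed

lemma esym_quot_partial_second_smallest_ge:
  assumes "finite A" "y \<in> Gamma_on A k" "l < k" "k < card A"
    and "a \<in> A" "b \<in> A" "a \<noteq> b" "\<And>p. p \<in> A - {a, b} \<Longrightarrow> y b \<le> y p"
  shows "esym_quot_partial_const (card A) k l * (\<Sum>p\<in>A. esym_quot_partial A k l y p) \<le> esym_quot_partial A k l y b"
proof -
  let ?e = "\<lambda>j. esym_on A j y" and ?e' = "\<lambda>j. esym_on (A - {b}) j y"
  define D where "D = esym_remove_const (card A) (k - 1) * esym_remove_const (card A) l"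
  define q where "q = 1 - real l / real k"
  define r where "r = esym_on A (k - 1) y / esym_on A l y"
  have "0 < ?e l" using Gamma_on_esym_on_pos[OF assms(1,2)] assms(3) by simp
  have "0 < D"
    using esym_remove_const_ge_1[of "card A"] by (simp add: D_def mult_ge1_I less_le_trans[OF zero_less_one])
  have "0 \<le> q" using assms(3) by (simp add: q_def)
  have "q / D * r * (?e l)\<^sup>2 = q / D * (?e (k - 1) * ?e l)"
    using \<open>0 < ?e l\<close> by (simp add: r_def power2_eq_square)
  also have "\<dots> \<le> q / D * (D * (?e' (k - 1) * ?e' l))"
    using esym_on_mult_le_remove_second_smallest[OF assms] \<open>0 \<le> q\<close> \<open>0 < D\<close>
    by (intro mult_left_mono) (simp_all add: D_def)
  also have "\<dots> = q * (?e' (k - 1) * ?e' l)" using \<open>0 < D\<close> by simp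
  also have "\<dots> \<le> esym_quot_partial A k l y b * (?e l)\<^sup>2"
    using esym_quot_partial_lower_bound[OF assms(1,6,2,3)] by (simp add: q_def)
  finally have "q / D * r \<le> esym_quot_partial A k l y b"
    by (rule mult_right_le_imp_le) (use \<open>0 < ?e l\<close> in simp)
  moreover have "esym_quot_partial_const (card A) k l * (\<Sum>p\<in>A. esym_quot_partial A k l y p)
      \<le> esym_quot_partial_const (card A) k l * ((real (card A) - real k + 1) * r)"
    using sum_esym_quot_partial_bounds(2)[OF assms(1-3)] esym_quot_partial_const_pos_le_1(1)[OF assms(3,4)]
    by (intro mult_left_mono) (simp_all add: r_def)
  moreover have "esym_quot_partial_const (card A) k l * ((real (card A) - real k + 1) * r) = q / D * r"
    using assms(4) by (simp add: esym_quot_partial_const_def D_def q_def)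
  ultimately show ?thesis by linarith
qed

lemma sum_Fii_eq:
  assumes "esym n l (lam \<theta> \<mu> n \<kappa>) \<noteq> 0"
  shows "(\<Sum>i<n. Fii n k l \<theta> \<mu> \<kappa> i)
    = (real n * \<theta> - \<mu>) * (\<Sum>p<n. esym_quot_partial {..<n} k l (lam \<theta> \<mu> n \<kappa>) p)"
proof -
  let ?q = "esym_quot_partial {..<n} k l (lam \<theta> \<mu> n \<kappa>)"
  have "(\<Sum>i<n. Fii n k l \<theta> \<mu> \<kappa> i) = (\<Sum>i<n. \<theta> * (\<Sum>p<n. ?q p) - \<mu> * ?q i)"
    using assms by (intro sum.cong) (simp_all add: Fii_eq_esym_quot_partial)
  then show ?thesis by (simp add: sum_subtractf sum_distrib_left[symmetric] algebra_simps)
qed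

lemma Fii_0_ge:
  assumes "l < k" "k < n" "\<mu> \<le> \<theta>" "0 < \<theta>" "lam \<theta> \<mu> n \<kappa> \<in> Gamma n k"
    and "\<forall>i j. i \<le> j \<and> j < n \<longrightarrow> \<kappa> j \<le> \<kappa> i"
  shows "\<theta> * esym_quot_partial_const n k l * (\<Sum>p<n. esym_quot_partial {..<n} k l (lam \<theta> \<mu> n \<kappa>) p) \<le> Fii n k l \<theta> \<mu> \<kappa> 0"
proof -
  let ?y = "lam \<theta> \<mu> n \<kappa>"
  let ?q = "esym_quot_partial {..<n} k l ?y" and ?c = "esym_quot_partial_const n k l"
  let ?S = "\<Sum>p<n. ?q p"
  have y: "?y \<in> Gamma_on {..<n} k" using assms(5) by (simp add: Gamma_eq_Gamma_on)
  have q_nonneg: "0 \<le> ?q p" if "p < n" for p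
    using esym_quot_partial_nonneg[OF _ _ y assms(1)] that by simp
  have "0 < ?c" "?c \<le> 1" using esym_quot_partial_const_pos_le_1[OF assms(1,2)] by simp_all
  have "0 \<le> ?S" using q_nonneg by (intro sum_nonneg) simp
  then have cS: "?c * ?S \<le> ?S" using \<open>0 < ?c\<close> \<open>?c \<le> 1\<close> by (simp add: mult_left_le_one_le)
  have "esym n l ?y \<noteq> 0" using Gamma_esym_pos[OF assms(5), of l] assms(1) by simp
  then have F0: "Fii n k l \<theta> \<mu> \<kappa> 0 = \<theta> * ?S - \<mu> * ?q 0"
    using assms(2) by (simp add: Fii_eq_esym_quot_partial)
  show ?thesis
  proof (cases "\<mu> \<le> 0")
    case True
    have "\<theta> * ?c * ?S \<le> \<theta> * ?S"
      using cS assms(4) by (simp add: mult.assoc)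
    moreover have "\<mu> * ?q 0 \<le> 0" using True q_nonneg[of 0] assms(2) by (simp add: mult_nonpos_nonneg)
    ultimately show ?thesis using F0 by simp
  next
    case False
    \<comment> \<open>for mu > 0 the entries of lambda increase with the index, so index 1 carries the second smallest\<close>
    have "?y 1 \<le> ?y p" if "p \<in> {..<n} - {0, 1}" for p
      using that assms(6) False by (auto simp: lam_def)
    then have "?c * ?S \<le> ?q 1"
      using esym_quot_partial_second_smallest_ge[OF _ y assms(1), of 0 1] assms(1,2) by simp
    also have "\<dots> \<le> (\<Sum>p\<in>{..<n} - {0}. ?q p)"
      using assms(1,2) q_nonneg by (intro member_le_sum) auto
    also have "\<dots> = ?S - ?q 0"
      using assms(2) by (simp add: sum_diff1)
    finally have "\<mu> * (?c * ?S) \<le> \<mu> * (?S - ?q 0)"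
      using False by simp
    moreover have "(\<theta> - \<mu>) * (?c * ?S) \<le> (\<theta> - \<mu>) * ?S"
      using cS assms(3) by (simp add: mult_left_mono)
    ultimately show ?thesis using F0 by (simp add: algebra_simps)
  qed
qed

lemma sum_Fii_ge:
  assumes "l < k" "k < n" "\<mu> \<le> \<theta>" "0 < \<theta>" "lam \<theta> \<mu> n \<kappa> \<in> Gamma n k"
  shows "(real n * \<theta> - \<mu>) * ((real n - real k + 1) * (1 - real l / real k)) * min 1 (Fq n k l \<theta> \<mu> \<kappa>)
    \<le> (\<Sum>i<n. Fii n k l \<theta> \<mu> \<kappa> i)"
proof -
  let ?y = "lam \<theta> \<mu> n \<kappa>"
  let ?c = "(real n - real k + 1) * (1 - real l / real k)"
  let ?r = "esym_on {..<n} (k - 1) ?y / esym_on {..<n} l ?y"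
  have y: "?y \<in> Gamma_on {..<n} k" using assms(5) by (simp add: Gamma_eq_Gamma_on)
  have "esym n l ?y \<noteq> 0" using Gamma_esym_pos[OF assms(5), of l] assms(1) by simp
  have "\<theta> * 1 < \<theta> * real n" using assms(1,2,4) by (intro mult_strict_left_mono) simp_all
  then have "0 < real n * \<theta> - \<mu>" using assms(3) by (simp add: mult.commute)
  have "0 \<le> ?c" using assms(1,2) by simp
  have "min 1 (Fq n k l \<theta> \<mu> \<kappa>) \<le> ?r"
    using esym_on_ratio_ge_min[OF _ y assms(1)] by (simp add: Fq_def esym_eq_esym_on)
  then have "?c * min 1 (Fq n k l \<theta> \<mu> \<kappa>) \<le> ?c * ?r"
    using \<open>0 \<le> ?c\<close> by (rule mult_left_mono)
  also have "\<dots> \<le> (\<Sum>p<n. esym_quot_partial {..<n} k l ?y p)"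
    using sum_esym_quot_partial_bounds(1)[OF _ y assms(1)] by (simp add: mult.assoc)
  finally show ?thesis
    using sum_Fii_eq[OF \<open>esym n l ?y \<noteq> 0\<close>, of k] \<open>0 < real n * \<theta> - \<mu>\<close>
    by (simp add: mult.assoc mult_left_mono)
qed

theorem lemma3p1:
  fixes n k l :: nat and \<theta> \<mu> :: real
  assumes "l < k" "k < n" "\<theta> \<ge> \<mu>" "\<theta> > 0"
  shows "(\<exists>c1>0. \<forall>\<kappa>. lam \<theta> \<mu> n \<kappa> \<in> Gamma n k \<and> (\<forall>i j. i \<le> j \<and> j < n \<longrightarrow> \<kappa> j \<le> \<kappa> i)
            \<longrightarrow> Fii n k l \<theta> \<mu> \<kappa> 0 \<ge> c1 * (\<Sum>i<n. Fii n k l \<theta> \<mu> \<kappa> i))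
       \<and> (\<forall>m>0. \<exists>c2>0. \<forall>\<kappa>. lam \<theta> \<mu> n \<kappa> \<in> Gamma n k \<and> (\<forall>i j. i \<le> j \<and> j < n \<longrightarrow> \<kappa> j \<le> \<kappa> i)
            \<and> Fq n k l \<theta> \<mu> \<kappa> \<ge> m \<longrightarrow> (\<Sum>i<n. Fii n k l \<theta> \<mu> \<kappa> i) \<ge> c2)"
proof -
  define N where "N = real n * \<theta> - \<mu>"
  define c where "c = (real n - real k + 1) * (1 - real l / real k)"
  have "\<theta> * 1 < \<theta> * real n" using assms by (intro mult_strict_left_mono) simp_all
  then have "0 < N" using assms(3) by (simp add: N_def mult.commute)
  have "0 < c" using assms(1,2) by (simp add: c_def)
  have "0 < \<theta> * esym_quot_partial_const n k l / N"
    using esym_quot_partial_const_pos_le_1(1)[OF assms(1,2)] assms(4) \<open>0 < N\<close> by simp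
  moreover have "\<theta> * esym_quot_partial_const n k l / N * (\<Sum>i<n. Fii n k l \<theta> \<mu> \<kappa> i) \<le> Fii n k l \<theta> \<mu> \<kappa> 0"
    if "lam \<theta> \<mu> n \<kappa> \<in> Gamma n k" "\<forall>i j. i \<le> j \<and> j < n \<longrightarrow> \<kappa> j \<le> \<kappa> i" for \<kappa>
  proof -
    have "(\<Sum>i<n. Fii n k l \<theta> \<mu> \<kappa> i) = N * (\<Sum>p<n. esym_quot_partial {..<n} k l (lam \<theta> \<mu> n \<kappa>) p)"
      using sum_Fii_eq Gamma_esym_pos[OF that(1), of l] assms(1) by (simp add: N_def)
    then show ?thesis using Fii_0_ge[OF assms that] \<open>0 < N\<close> by simp
  qed
  moreover have "N * c * min 1 m \<le> (\<Sum>i<n. Fii n k l \<theta> \<mu> \<kappa> i)"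
    if "lam \<theta> \<mu> n \<kappa> \<in> Gamma n k" "m \<le> Fq n k l \<theta> \<mu> \<kappa>" for \<kappa> m
  proof -
    have "N * c * min 1 m \<le> N * c * min 1 (Fq n k l \<theta> \<mu> \<kappa>)"
      using \<open>0 < N\<close> \<open>0 < c\<close> that(2) by (intro mult_left_mono min.mono) simp_all
    also have "\<dots> \<le> (\<Sum>i<n. Fii n k l \<theta> \<mu> \<kappa> i)"
      using sum_Fii_ge[OF assms that(1)] by (simp add: N_def c_def)
    finally show ?thesis .
  qed
  moreover have "0 < N * c * min 1 m" if "0 < m" for m
    using \<open>0 < N\<close> \<open>0 < c\<close> that by simp
  ultimately show ?thesis by blast
qed

end
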